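(* Let $q$ be a prime power, $\beta$ a primitive element of $\mathbb{F}_{q^2}$, $\mathrm{Tr}(x)=x+x^q$, and $\Psi:\mathbb{F}_{q^2}^n\to\mathbb{F}_q^{2n}$, $\Psi(\alpha_0,\ldots,\alpha_{n-1})=\left(\mathrm{Tr}(\beta\alpha_0),\ldots,\mathrm{Tr}(\beta\alpha_{n-1}),\mathrm{Tr}(\beta^q\alpha_0),\ldots,\mathrm{Tr}(\beta^q\alpha_{n-1})\right)$. Let $g(x)\in\mathbb{F}_q[x]$ be a monic divisor of $x^{2n}-1$ with $g(x)\neq x^{2n}-1$ and $k=\deg g$, let $\mathscr{D}=\langle g(x)\rangle$ be the $q$-ary linear cyclic code of length $2n$ it generates, and $\mathscr{C}=\Psi^{-1}(\mathscr{D})$. Let $h(x)=(x^{2n}-1)/g(x)=h_0+\cdots+h_{2n-k}x^{2n-k}$, $h^*(x)=\frac{1}{h_{2n-k}}x^{2n-k}h(1/x)$, and $V_{h^*(x)}\in\mathbb{F}_q^{2n}$ its coefficient vector. Then the $k$ vectors $\Psi^{-1}(\tau(\sigma^{i}(V_{h^*(x)})))$, $0\le i\le k-1$, form an $\mathbb{F}_q$-basis of the alternating dual $\mathscr{C}^{\perp_a}$ (i.e., they are the rows of an additive generator matrix of $\mathscr{C}^{\perp_a}$).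
   Context: $\sigma(v_0,\ldots,v_{2n-1})=(v_{2n-1},v_0,\ldots,v_{2n-2})$ and $\tau(v_0,\ldots,v_{2n-1})=(-v_n,\ldots,-v_{2n-1},v_0,\ldots,v_{n-1})$. The alternating inner product on $\mathbb{F}_{q^2}^n$ is $\langle u,v\rangle_a=(\beta^{2q}-\beta^2)\sum_{i=0}^{n-1}(u_iv_i^q-u_i^qv_i)$ and $\mathscr{C}^{\perp_a}=\{v\in\mathbb{F}_{q^2}^n:\langle u,v\rangle_a=0\ \forall u\in\mathscr{C}\}$. Vectors of $\mathbb{F}_q^{2n}$ are identified with polynomials of degree $<2n$ modulo $x^{2n}-1$. *)

theory Defs
  imports "HOL-Computational_Algebra.Polynomial"
begin

(* The field F_{q^2} is a finite field type 'a with CARD('a) = q^2;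
   F_q is its subfield {x. x^q = x}. Vectors are lists. *)

definition subfield_q :: "nat \<Rightarrow> 'a::field set" where
  "subfield_q q = {x. x ^ q = x}"

definition prime_power :: "nat \<Rightarrow> bool" where
  "prime_power q \<longleftrightarrow> (\<exists>p m. prime p \<and> m > 0 \<and> q = p ^ m)"

definition primitive_elem :: "'a::field \<Rightarrow> bool" where
  "primitive_elem \<beta> \<longleftrightarrow> (\<forall>x. x \<noteq> 0 \<longrightarrow> (\<exists>j::nat. \<beta> ^ j = x))"

definition Tr :: "nat \<Rightarrow> 'a::field \<Rightarrow> 'a" where
  "Tr q x = x + x ^ q"

definition Psi :: "nat \<Rightarrow> 'a::field \<Rightarrow> 'a list \<Rightarrow> 'a list" where
  "Psi q \<beta> \<alpha> = map (\<lambda>a. Tr q (\<beta> * a)) \<alpha> @ map (\<lambda>a. Tr q (\<beta> ^ q * a)) \<alpha>"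

definition Psi_inv :: "nat \<Rightarrow> 'a::field \<Rightarrow> nat \<Rightarrow> 'a list \<Rightarrow> 'a list" where
  "Psi_inv q \<beta> n w = (THE a. length a = n \<and> Psi q \<beta> a = w)"

definition sigma :: "'a list \<Rightarrow> 'a list" where
  "sigma v = last v # butlast v"

definition tau :: "nat \<Rightarrow> 'a::ab_group_add list \<Rightarrow> 'a list" where
  "tau n v = map uminus (drop n v) @ take n v"

definition coeff_vec :: "nat \<Rightarrow> 'a::zero poly \<Rightarrow> 'a list" where
  "coeff_vec m p = map (coeff p) [0..<m]"

definition xn1 :: "nat \<Rightarrow> 'a::comm_ring_1 poly" where
  "xn1 m = monom 1 m - 1"

definition over_Fq :: "nat \<Rightarrow> 'a::field poly \<Rightarrow> bool" where
  "over_Fq q p \<longleftrightarrow> (\<forall>i. coeff p i \<in> subfield_q q)"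

definition cyclic_code :: "nat \<Rightarrow> nat \<Rightarrow> 'a::field poly \<Rightarrow> 'a list set" where
  "cyclic_code q n g =
     {coeff_vec (2*n) ((g * f) mod xn1 (2*n)) | f. over_Fq q f}"

definition code_C :: "nat \<Rightarrow> 'a::field \<Rightarrow> nat \<Rightarrow> 'a poly \<Rightarrow> 'a list set" where
  "code_C q \<beta> n g = {\<alpha>. length \<alpha> = n \<and> Psi q \<beta> \<alpha> \<in> cyclic_code q n g}"

definition alt_ip :: "nat \<Rightarrow> 'a::field \<Rightarrow> nat \<Rightarrow> 'a list \<Rightarrow> 'a list \<Rightarrow> 'a" where
  "alt_ip q \<beta> n u v = (\<beta> ^ (2*q) - \<beta> ^ 2) *
     (\<Sum>i<n. u ! i * (v ! i) ^ q - (u ! i) ^ q * v ! i)"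

definition alt_dual :: "nat \<Rightarrow> 'a::field \<Rightarrow> nat \<Rightarrow> 'a list set \<Rightarrow> 'a list set" where
  "alt_dual q \<beta> n C = {v. length v = n \<and> (\<forall>u\<in>C. alt_ip q \<beta> n u v = 0)}"

definition lincomb :: "nat \<Rightarrow> nat \<Rightarrow> (nat \<Rightarrow> 'a::field) \<Rightarrow> (nat \<Rightarrow> 'a list) \<Rightarrow> 'a list" where
  "lincomb n k c v = map (\<lambda>j. \<Sum>i<k. c i * (v i ! j)) [0..<n]"

definition is_Fq_basis :: "nat \<Rightarrow> nat \<Rightarrow> nat \<Rightarrow> (nat \<Rightarrow> 'a::field list) \<Rightarrow> 'a list set \<Rightarrow> bool" where
  "is_Fq_basis q n k v S \<longleftrightarrow>
     (\<forall>i<k. v i \<in> S) \<and>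
     (\<forall>c. (\<forall>i<k. c i \<in> subfield_q q) \<and> lincomb n k c v = replicate n 0
            \<longrightarrow> (\<forall>i<k. c i = 0)) \<and>
     (\<forall>w\<in>S. \<exists>c. (\<forall>i<k. c i \<in> subfield_q q) \<and> w = lincomb n k c v)"

end

theory Submission
  imports Defs "HOL-Computational_Algebra.Primes"
begin

(* Since beta is primitive, beta^2 <> beta^(2q), so the two traces Tr(beta a) and Tr(beta^q a)
   determine a: Psi is an F_q-linear bijection onto F_q^(2n). Expanding the traces gives
   <u,v>_a = Psi(u) . tau(Psi(v)), hence the alternating dual of Psi^-1(D) is Psi^-1(tau(D^perp)),
   where D^perp is the Euclidean dual. For the cyclic code D = <g> with check polynomial h, the dot
   product of a codeword with w is the top coefficient of its product with the reversal of w modulo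
   x^(2n) - 1; so w is orthogonal to D iff h divides that reversal, i.e. D^perp has the F_q-basis
   x^i h*(x), i < deg g. These are the shifts sigma^i(V), and the bijection Psi^-1 o tau carries
   them to a basis of the alternating dual. *)

section \<open>Finite fields\<close>

lemma of_nat_card_UNIV_eq_0: "of_nat (card (UNIV :: 'a::{ring_1,finite} set)) = (0 :: 'a)"
proof -
  have "(\<Sum>x\<in>UNIV. x + 1) = (\<Sum>x\<in>UNIV. x :: 'a)"
    by (rule sum.reindex_bij_witness[of _ "\<lambda>x. x - 1" "\<lambda>x. x + 1"]) auto
  then show ?thesis
    by (simp add: sum.distrib)
qed

lemma CHAR_dvd_card_UNIV: "CHAR('a::{ring_1,finite}) dvd card (UNIV :: 'a set)"
  using of_nat_card_UNIV_eq_0[where 'a = 'a] by (simp add: of_nat_eq_0_iff_char_dvd)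

lemma finite_field_pow_card_UNIV: "x ^ card (UNIV :: 'a set) = (x :: 'a::{field,finite})"
proof (cases "x = 0")
  case False
  let ?U = "UNIV - {0 :: 'a}"
  have "(\<Prod>y\<in>?U. y) = (\<Prod>y\<in>?U. x * y)"
    by (rule prod.reindex_bij_witness[of _ "\<lambda>y. x * y" "\<lambda>y. y / x"]) (use False in auto)
  also have "\<dots> = x ^ card ?U * (\<Prod>y\<in>?U. y)"
    by (simp add: prod.distrib)
  finally have "x ^ card ?U = 1"
    by simp
  moreover have "card (UNIV :: 'a set) = Suc (card ?U)"
    by (simp add: card_Diff_singleton card_gt_0_iff)
  ultimately show ?thesis
    by (simp only: power_Suc mult_1_right)
qed (simp add: card_gt_0_iff)

lemma CHAR_eq_if_card_UNIV_eq_prime_power: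
  assumes "prime p" and "card (UNIV :: 'a::{field,finite} set) = p ^ e"
  shows "CHAR('a) = p"
proof -
  have "prime CHAR('a)"
    by (rule prime_CHAR_semidom) (simp add: finite_imp_CHAR_pos)
  moreover have "CHAR('a) dvd p ^ e"
    using CHAR_dvd_card_UNIV[where 'a = 'a] assms(2) by simp
  ultimately have "CHAR('a) dvd p"
    by (rule prime_dvd_power)
  then show ?thesis
    using \<open>prime CHAR('a)\<close> assms(1) by (simp add: primes_dvd_imp_eq)
qed

locale frobenius_involution =
  fixes q :: nat
  assumes q_pos: "0 < q"
    and frob_add: "\<And>x y :: 'a::field. (x + y) ^ q = x ^ q + y ^ q"
    and frob_frob: "\<And>x :: 'a. (x ^ q) ^ q = x"

lemma frobenius_involution_if_card_UNIV_eq_sq: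
  assumes "prime_power q" and "card (UNIV :: 'a::{field,finite} set) = q ^ 2"
  shows "frobenius_involution TYPE('a) q"
proof
  obtain p e where p: "prime p" "0 < e" "q = p ^ e"
    using assms(1) unfolding prime_power_def by blast
  then show "0 < q"
    using prime_gt_0_nat by simp
  have "CHAR('a) = p"
    by (rule CHAR_eq_if_card_UNIV_eq_prime_power[OF p(1)]) (simp add: assms(2) p(3) power_mult[symmetric])
  then show "(x + y) ^ q = x ^ q + y ^ q" for x y :: 'a
    using freshmans_dream'[of q e x y] p by simp
  show "(x ^ q) ^ q = x" for x :: 'a
    using finite_field_pow_card_UNIV[of x] assms(2) by (simp add: power_mult[symmetric] power2_eq_square)
qed

lemma prime_power_ge_2: "prime_power q \<Longrightarrow> 2 \<le> q"
proof -
  assume "prime_power q"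
  then obtain p e where "prime p" "0 < e" "q = p ^ e"
    unfolding prime_power_def by blast
  moreover have "p \<le> p ^ e"
    using \<open>0 < e\<close> prime_ge_1_nat[OF \<open>prime p\<close>] by (rule self_le_power[rotated])
  ultimately show ?thesis
    using prime_ge_2_nat[of p] by linarith
qed

section \<open>Vectors, dual codes and bases\<close>

definition Fq_vec :: "nat \<Rightarrow> nat \<Rightarrow> 'a::field list set" where
  "Fq_vec q m = {w. length w = m \<and> set w \<subseteq> subfield_q q}"

definition dotp :: "nat \<Rightarrow> 'a::comm_ring_1 list \<Rightarrow> 'a list \<Rightarrow> 'a" where
  "dotp m u w = (\<Sum>j<m. u ! j * w ! j)"

definition euclid_dual :: "nat \<Rightarrow> nat \<Rightarrow> 'a::field list set \<Rightarrow> 'a list set" where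
  "euclid_dual q m D = {w \<in> Fq_vec q m. \<forall>d\<in>D. dotp m d w = 0}"

lemma dotp_uminus_right: "length w = m \<Longrightarrow> dotp m u (map uminus w) = - dotp m u w"
  by (simp add: dotp_def sum_negf)

lemma sum_lessThan_add: "(\<Sum>j<a + (b :: nat). f j) = (\<Sum>j<a. f j) + (\<Sum>j<b. f (a + j))"
  by (induction b) (simp_all add: add.assoc)

lemma length_Psi [simp]: "length (Psi q \<beta> a) = 2 * length a"
  by (simp add: Psi_def)

lemma nth_Psi:
  "j < 2 * length a \<Longrightarrow> Psi q \<beta> a ! j =
     (if j < length a then Tr q (\<beta> * a ! j) else Tr q (\<beta> ^ q * a ! (j - length a)))"
  by (simp add: Psi_def nth_append)

lemma length_tau [simp]: "length (tau n v) = length v"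
  by (simp add: tau_def)

lemma nth_tau:
  "length v = 2 * n \<Longrightarrow> j < 2 * n \<Longrightarrow> tau n v ! j = (if j < n then - v ! (n + j) else v ! (j - n))"
  by (auto simp: tau_def nth_append min_def)

lemma tau_tau: "length v = 2 * n \<Longrightarrow> tau n (tau n v) = map uminus v"
  by (rule nth_equalityI) (auto simp: nth_tau)

lemma tau_uminus_tau: "length v = 2 * n \<Longrightarrow> tau n (map uminus (tau n v)) = v"
  by (rule nth_equalityI) (auto simp: nth_tau)

lemma length_lincomb [simp]: "length (lincomb n k c v) = n"
  by (simp add: lincomb_def)

lemma nth_lincomb: "j < n \<Longrightarrow> lincomb n k c v ! j = (\<Sum>i<k. c i * v i ! j)"
  by (simp add: lincomb_def)

lemma lincomb_0: "(\<And>i. i < k \<Longrightarrow> c i = 0) \<Longrightarrow> lincomb n k c v = replicate n 0"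
  by (rule nth_equalityI) (simp_all add: nth_lincomb)

lemma lincomb_cong: "(\<And>i. i < k \<Longrightarrow> v i = v' i) \<Longrightarrow> lincomb n k c v = lincomb n k c v'"
  by (simp add: lincomb_def)

lemma tau_lincomb:
  "(\<And>i. i < k \<Longrightarrow> length (v i) = 2 * n) \<Longrightarrow>
     tau n (lincomb (2 * n) k c v) = lincomb (2 * n) k c (\<lambda>i. tau n (v i))"
  by (rule nth_equalityI) (auto simp: nth_tau nth_lincomb sum_negf)

lemma is_Fq_basis_image:
  fixes v :: "nat \<Rightarrow> 'a::field list" and T :: "'a list \<Rightarrow> 'a list"
  assumes basis: "is_Fq_basis q m k v S"
    and zero: "(0 :: 'a) \<in> subfield_q q"
    and linear: "\<And>c. \<forall>i<k. c i \<in> subfield_q q \<Longrightarrow> T (lincomb m k c v) = lincomb n k c (\<lambda>i. T (v i))"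
    and inj: "inj_on T {lincomb m k c v | c. \<forall>i<k. c i \<in> subfield_q q}"
  shows "is_Fq_basis q n k (\<lambda>i. T (v i)) (T ` S)"
  unfolding is_Fq_basis_def
proof (intro conjI allI impI ballI)
  show "T (v i) \<in> T ` S" if "i < k" for i
    using basis that by (simp add: is_Fq_basis_def)
next
  fix c i
  assume c: "(\<forall>i<k. c i \<in> subfield_q q) \<and> lincomb n k c (\<lambda>i. T (v i)) = replicate n 0" and "i < k"
  have "T (lincomb m k (\<lambda>_. 0) v) = lincomb n k (\<lambda>_. 0) (\<lambda>i. T (v i))"
    using zero by (simp add: linear)
  then have "T (lincomb m k (\<lambda>_. 0) v) = replicate n 0"
    by (simp add: lincomb_0)
  then have "T (lincomb m k c v) = T (lincomb m k (\<lambda>_. 0) v)"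
    using c linear by simp
  then have "lincomb m k c v = lincomb m k (\<lambda>_. 0) v"
    by (rule inj_onD[OF inj]) (use c zero in auto)
  then have "lincomb m k c v = replicate m 0"
    by (simp add: lincomb_0)
  then show "c i = 0"
    using basis c \<open>i < k\<close> by (simp add: is_Fq_basis_def)
next
  fix w
  assume "w \<in> T ` S"
  then obtain s where "s \<in> S" "w = T s"
    by blast
  then obtain c where "\<forall>i<k. c i \<in> subfield_q q" "w = T (lincomb m k c v)"
    using basis by (auto simp: is_Fq_basis_def)
  then show "\<exists>c. (\<forall>i<k. c i \<in> subfield_q q) \<and> w = lincomb n k c (\<lambda>i. T (v i))"
    by (auto simp: linear)
qed

lemma is_Fq_basis_cong:
  "(\<And>i. i < k \<Longrightarrow> v i = v' i) \<Longrightarrow> is_Fq_basis q n k v S = is_Fq_basis q n k v' S"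
  by (simp add: is_Fq_basis_def cong: lincomb_cong)

section \<open>Cyclic codes and their check polynomial\<close>

lemma coeff_xn1: "coeff (xn1 m :: 'a::comm_ring_1 poly) i = (if i = m then 1 else 0) - (if i = 0 then 1 else 0)"
  by (simp add: xn1_def coeff_monom)

lemma degree_xn1: "0 < m \<Longrightarrow> degree (xn1 m :: 'a::comm_ring_1 poly) = m"
  by (intro antisym degree_le le_degree) (auto simp: coeff_xn1)

lemma xn1_nonzero: "0 < m \<Longrightarrow> (xn1 m :: 'a::comm_ring_1 poly) \<noteq> 0"
proof
  assume "0 < m" "xn1 m = (0 :: 'a poly)"
  then show False
    using coeff_xn1[of m m, where 'a = 'a] by simp
qed

lemma lead_coeff_xn1: "0 < m \<Longrightarrow> lead_coeff (xn1 m :: 'a::comm_ring_1 poly) = 1"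
  by (simp add: degree_xn1 coeff_xn1)

lemma degree_mod_xn1_less: "0 < m \<Longrightarrow> degree (A mod xn1 m :: 'a::field poly) < m"
  using degree_mod_less[OF xn1_nonzero, of m A] by (auto simp: degree_xn1)

lemma factors_xn1:
  fixes g h :: "'a::field poly"
  assumes "g * h = xn1 m" "0 < m"
  shows "g \<noteq> 0" "h \<noteq> 0" "degree g + degree h = m" "coeff h 0 \<noteq> 0"
proof -
  show "g \<noteq> 0" "h \<noteq> 0"
    using assms xn1_nonzero[of m] by auto
  then show "degree g + degree h = m"
    using assms by (simp add: degree_mult_eq[symmetric] degree_xn1)
  have "coeff g 0 * coeff h 0 = -1"
    using assms by (simp add: coeff_mult_0[symmetric] coeff_xn1)
  then show "coeff h 0 \<noteq> 0"
    by auto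
qed

lemma length_coeff_vec [simp]: "length (coeff_vec m P) = m"
  by (simp add: coeff_vec_def)

lemma nth_coeff_vec [simp]: "j < m \<Longrightarrow> coeff_vec m P ! j = coeff P j"
  by (simp add: coeff_vec_def)

lemma coeff_vec_0 [simp]: "coeff_vec m 0 = replicate m 0"
  by (rule nth_equalityI) simp_all

lemma coeff_vec_Poly: "length w = m \<Longrightarrow> coeff_vec m (Poly w) = w"
  by (rule nth_equalityI) (auto simp: nth_default_def)

lemma Poly_coeff_vec: "degree P < m \<Longrightarrow> Poly (coeff_vec m P) = P"
  by (rule poly_eqI) (auto simp: nth_default_def coeff_eq_0)

lemma degree_Poly_less: "length w = m \<Longrightarrow> 0 < m \<Longrightarrow> degree (Poly w) < m"
proof -
  assume "length w = m" "0 < m"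
  then have "degree (Poly w) \<le> m - 1"
    by (intro degree_le) (auto simp: nth_default_def)
  with \<open>0 < m\<close> show ?thesis
    by simp
qed

lemma reflect_poly_monom: "reflect_poly (monom c i) = [:c:]"
  by (cases "c = 0", simp, rule poly_eqI) (auto simp: coeff_reflect_poly coeff_monom degree_monom_eq coeff_pCons split: nat.split)

lemma Poly_rev_coeff_vec:
  fixes P :: "'a::comm_ring_1 poly"
  assumes "degree P < m"
  shows "Poly (rev (coeff_vec m P)) = monom 1 (m - 1 - degree P) * reflect_poly P"
proof (rule poly_eqI)
  fix t
  let ?s = "m - 1 - degree P"
  have "coeff (Poly (rev (coeff_vec m P))) t = (if t < m then coeff P (m - 1 - t) else 0)"
    by (auto simp: nth_default_def rev_nth)
  also have "\<dots> = coeff (monom 1 ?s * reflect_poly P) t"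
  proof (cases "?s \<le> t \<and> t < m")
    case True
    then have "t - ?s \<le> degree P" "degree P - (t - ?s) = m - 1 - t"
      using assms by linarith+
    then show ?thesis
      using True by (simp add: coeff_monom_mult coeff_reflect_poly)
  next
    case False
    then have "t < m \<Longrightarrow> degree P < m - 1 - t" "\<not> t < m \<Longrightarrow> degree P < t - ?s"
      using assms by linarith+
    then show ?thesis
      using False by (auto simp: coeff_monom_mult coeff_reflect_poly coeff_eq_0)
  qed
  finally show "coeff (Poly (rev (coeff_vec m P))) t = coeff (monom 1 ?s * reflect_poly P) t" .
qed

lemma coeff_mod_xn1_top:
  fixes X :: "'a::field poly"
  assumes "0 < m" and "degree X < 2 * m - 1"
  shows "coeff (X mod xn1 m) (m - 1) = coeff X (m - 1)"
proof -
  define D where "D = X div xn1 m"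
  have X: "X = xn1 m * D + X mod xn1 m"
    by (simp add: D_def)
  have "coeff D (m - 1) = 0"
  proof (cases "D = 0")
    case False
    have "m + degree D = degree (xn1 m * D)"
      using False assms(1) by (simp add: degree_mult_eq xn1_nonzero degree_xn1)
    also have "\<dots> \<le> max (degree X) (degree (X mod xn1 m))"
      using degree_diff_le_max[of X "X mod xn1 m"] X by (metis add_diff_cancel_right')
    finally have "degree D < m - 1"
      using assms degree_mod_xn1_less[of m X] by linarith
    then show ?thesis
      by (simp add: coeff_eq_0)
  qed simp
  then have "coeff (xn1 m * D) (m - 1) = 0"
    using assms(1) by (simp add: xn1_def left_diff_distrib coeff_monom_mult)
  then show ?thesis
    by (subst (2) X) simp
qed

lemma coeff_mult_mod_xn1_top:
  fixes A B :: "'a::field poly"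
  assumes "degree A < m" "degree B < m"
  shows "coeff ((A * B) mod xn1 m) (m - 1) = coeff (A * B) (m - 1)"
  using assms degree_mult_le[of A B] by (intro coeff_mod_xn1_top) linarith+

lemma dotp_coeff_vec_eq_coeff_mod_xn1:
  fixes A :: "'a::field poly"
  assumes "degree A < m" "length w = m"
  shows "dotp m (coeff_vec m A) w = coeff ((A * Poly (rev w)) mod xn1 m) (m - 1)"
proof -
  have "0 < m"
    using assms(1) by simp
  have "dotp m (coeff_vec m A) w = (\<Sum>i\<le>m - 1. coeff A i * coeff (Poly (rev w)) (m - 1 - i))"
    using assms \<open>0 < m\<close> by (auto simp: dotp_def nth_default_def rev_nth lessThan_Suc_atMost[symmetric]
        intro!: sum.cong)
  also have "\<dots> = coeff (A * Poly (rev w)) (m - 1)"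
    by (simp add: coeff_mult)
  also have "\<dots> = coeff ((A * Poly (rev w)) mod xn1 m) (m - 1)"
    using assms \<open>0 < m\<close> by (intro coeff_mult_mod_xn1_top[symmetric]) (simp_all add: degree_Poly_less)
  finally show ?thesis .
qed

lemma lincomb_shifts:
  "lincomb m k c (\<lambda>i. coeff_vec m (monom 1 i * P)) = coeff_vec m ((\<Sum>i<k. monom (c i) i) * P)"
  by (rule nth_equalityI)
     (auto simp: nth_lincomb sum_distrib_right coeff_sum coeff_monom_mult intro!: sum.cong)

lemma sum_monom_coeff: "(\<And>i. k \<le> i \<Longrightarrow> coeff P i = 0) \<Longrightarrow> (\<Sum>i<k. monom (coeff P i) i) = P"
  by (rule poly_eqI) (auto simp: coeff_sum coeff_monom not_less)

lemma lincomb_shifts_eq_0_imp: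
  fixes P :: "'a::field poly"
  assumes "P \<noteq> 0" "degree P + k \<le> m" "lincomb m k c (\<lambda>i. coeff_vec m (monom 1 i * P)) = replicate m 0"
    and "i < k"
  shows "c i = 0"
proof -
  define R where "R = (\<Sum>i<k. monom (c i) i)"
  have coeff_R: "coeff R j = (if j < k then c j else 0)" for j
    by (simp add: R_def coeff_sum coeff_monom)
  have "R = 0"
  proof (rule ccontr)
    assume "R \<noteq> 0"
    have "degree R < k"
      using \<open>i < k\<close> by (intro le_less_trans[OF degree_le[of "k - 1"]]) (auto simp: coeff_R)
    then have "degree (R * P) < m"
      using \<open>R \<noteq> 0\<close> assms(1,2) by (simp add: degree_mult_eq)
    then have "R * P = Poly (coeff_vec m (R * P))"
      by (simp add: Poly_coeff_vec)
    also have "\<dots> = 0"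
      using assms(3) by (simp add: lincomb_shifts R_def)
    finally show False
      using \<open>R \<noteq> 0\<close> assms(1) by simp
  qed
  then show ?thesis
    using coeff_R[of i] \<open>i < k\<close> by simp
qed

lemma sigma_coeff_vec:
  fixes P :: "'a::comm_ring_1 poly"
  assumes "0 < m" "coeff P (m - 1) = 0"
  shows "sigma (coeff_vec m P) = coeff_vec m (monom 1 1 * P)"
proof -
  obtain m' where m: "m = Suc m'"
    using assms(1) by (cases m) auto
  have "sigma (coeff_vec m P) = coeff P m' # map (coeff P) [0..<m']"
    by (simp add: sigma_def coeff_vec_def m)
  also have "\<dots> = coeff_vec m (monom 1 1 * P)"
    using assms(2) by (intro nth_equalityI) (auto simp: m coeff_monom_mult nth_Cons split: nat.split)
  finally show ?thesis .
qed

lemma sigma_pow_coeff_vec: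
  fixes P :: "'a::comm_ring_1 poly"
  assumes "degree P + k \<le> m" "i < k"
  shows "(sigma ^^ i) (coeff_vec m P) = coeff_vec m (monom 1 i * P)"
  using assms(2)
proof (induction i)
  case (Suc i)
  have "coeff (monom 1 i * P) (m - 1) = 0"
    using Suc.prems assms(1) by (auto simp: coeff_monom_mult intro!: coeff_eq_0)
  then have "sigma (coeff_vec m (monom 1 i * P)) = coeff_vec m (monom 1 1 * (monom 1 i * P))"
    using Suc.prems assms(1) by (intro sigma_coeff_vec) auto
  then show ?case
    using Suc by (simp add: mult.assoc[symmetric] mult_monom)
qed simp

lemma dotp_codeword_shift_reflect_check_poly_eq_0:
  fixes g h f :: "'a::field poly"
  assumes "0 < m" "g * h = xn1 m" "i < degree g"
  shows "dotp m (coeff_vec m ((g * f) mod xn1 m)) (coeff_vec m (monom 1 i * reflect_poly h)) = 0"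
proof -
  note gh = factors_xn1[OF assms(2,1)]
  define P where "P = monom 1 i * reflect_poly h"
  have "degree P = i + degree h"
    using gh by (simp add: P_def degree_mult_eq degree_monom_eq)
  then have "degree P < m" "m - 1 - degree P = degree g - 1 - i"
    using gh(3) assms(3) by linarith+
  moreover have "reflect_poly P = h"
    using gh(4) by (simp add: P_def reflect_poly_mult reflect_poly_monom)
  ultimately have rev_P: "Poly (rev (coeff_vec m P)) = monom 1 (degree g - 1 - i) * h"
    by (simp add: Poly_rev_coeff_vec)
  have "dotp m (coeff_vec m ((g * f) mod xn1 m)) (coeff_vec m P)
      = coeff (((g * f) mod xn1 m * (monom 1 (degree g - 1 - i) * h)) mod xn1 m) (m - 1)"
    using assms(1) by (simp add: dotp_coeff_vec_eq_coeff_mod_xn1 degree_mod_xn1_less rev_P)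
  also have "((g * f) mod xn1 m * (monom 1 (degree g - 1 - i) * h)) mod xn1 m
      = (xn1 m * (f * monom 1 (degree g - 1 - i))) mod xn1 m"
    unfolding mod_mult_left_eq assms(2)[symmetric] by (simp only: ac_simps)
  finally show ?thesis
    by (simp add: P_def)
qed

lemma orthogonal_cyclic_code_imp_check_poly_dvd:
  fixes g h :: "'a::field poly"
  assumes "0 < m" "g * h = xn1 m" "length w = m"
    and orth: "\<And>j. j < m \<Longrightarrow> dotp m (coeff_vec m ((g * monom 1 j) mod xn1 m)) w = 0"
  shows "h dvd Poly (rev w)"
proof -
  define W where "W = Poly (rev w)"
  define Y where "Y = (g * W) mod xn1 m"
  have "coeff Y (m - 1 - j) = 0" if "j < m" for j
  proof -
    have "coeff Y (m - 1 - j) = coeff (monom 1 j * Y) (m - 1)"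
      using that by (simp add: coeff_monom_mult)
    also have "\<dots> = coeff ((monom 1 j * Y) mod xn1 m) (m - 1)"
      using that assms(1) by (intro coeff_mult_mod_xn1_top[symmetric]) (simp_all add: Y_def degree_monom_eq degree_mod_xn1_less)
    also have "(monom 1 j * Y) mod xn1 m = ((g * monom 1 j) mod xn1 m * W) mod xn1 m"
      unfolding Y_def mod_mult_right_eq mod_mult_left_eq by (simp only: ac_simps)
    also have "coeff \<dots> (m - 1) = dotp m (coeff_vec m ((g * monom 1 j) mod xn1 m)) w"
      using assms(1,3) by (simp add: W_def dotp_coeff_vec_eq_coeff_mod_xn1 degree_mod_xn1_less)
    finally show ?thesis
      using orth that by simp
  qed
  moreover have "degree Y < m"
    using assms(1) by (simp add: Y_def degree_mod_xn1_less)
  ultimately have "Y = 0"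
  proof (intro poly_eqI)
    fix t
    show "coeff Y t = coeff 0 t"
    proof (cases "t < m")
      case True
      then have "t = m - 1 - (m - 1 - t)" "m - 1 - t < m"
        by simp_all
      then show ?thesis
        using \<open>\<And>j. j < m \<Longrightarrow> coeff Y (m - 1 - j) = 0\<close> by (metis coeff_0)
    qed (use \<open>degree Y < m\<close> in \<open>simp add: coeff_eq_0\<close>)
  qed
  then have "g * h dvd g * W"
    by (simp add: Y_def assms(2) mod_eq_0_iff_dvd)
  then show ?thesis
    using factors_xn1[OF assms(2,1)] by (simp add: W_def)
qed

lemma rev_check_poly_multiple_eq_lincomb_shifts:
  fixes g h Q :: "'a::field poly"
  assumes "0 < m" "g * h = xn1 m" "length w = m" "Poly (rev w) = h * Q"
  shows "w = lincomb m (degree g) (coeff (monom 1 (degree g - 1 - degree Q) * reflect_poly Q))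
               (\<lambda>i. coeff_vec m (monom 1 i * reflect_poly h))"
proof (cases "Q = 0")
  case True
  then have "rev w = replicate m 0"
    using coeff_vec_Poly[of "rev w" m] assms(3,4) by simp
  then have "w = replicate m 0"
    by (metis rev_replicate rev_rev_ident)
  with True show ?thesis
    by (simp add: lincomb_0)
next
  case False
  note gh = factors_xn1[OF assms(2,1)]
  define R where "R = monom 1 (degree g - 1 - degree Q) * reflect_poly Q"
  have "degree h + degree Q < m"
    using degree_Poly_less[of "rev w" m] assms(1,3,4) False gh(2) by (simp add: degree_mult_eq)
  then have "degree Q < degree g"
    using gh(3) by linarith
  have "w = rev (coeff_vec m (h * Q))"
    using coeff_vec_Poly[of "rev w" m] assms(3,4) by simp
  also have "\<dots> = coeff_vec m (Poly (rev (coeff_vec m (h * Q))))"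
    by (simp add: coeff_vec_Poly)
  also have "Poly (rev (coeff_vec m (h * Q))) = monom 1 (m - 1 - degree (h * Q)) * reflect_poly (h * Q)"
    using \<open>degree h + degree Q < m\<close> False gh(2) by (intro Poly_rev_coeff_vec) (simp add: degree_mult_eq)
  also have "m - 1 - degree (h * Q) = degree g - 1 - degree Q"
    using False gh(2,3) by (simp add: degree_mult_eq)
  also have "monom 1 (degree g - 1 - degree Q) * reflect_poly (h * Q) = R * reflect_poly h"
    by (simp add: R_def reflect_poly_mult ac_simps)
  also have "coeff_vec m (R * reflect_poly h) = lincomb m (degree g) (coeff R) (\<lambda>i. coeff_vec m (monom 1 i * reflect_poly h))"
  proof -
    have "degree R \<le> degree g - 1"
      using degree_mult_le[of "monom 1 (degree g - 1 - degree Q)" "reflect_poly Q"] degree_reflect_poly_le[of Q]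
        \<open>degree Q < degree g\<close> by (simp add: R_def degree_monom_eq)
    then have "(\<Sum>i<degree g. monom (coeff R i) i) = R"
      using \<open>degree Q < degree g\<close> by (intro sum_monom_coeff coeff_eq_0) linarith
    then show ?thesis
      by (simp add: lincomb_shifts)
  qed
  finally show ?thesis
    by (simp add: R_def)
qed

section \<open>The subfield \<open>F\<^sub>q\<close>\<close>

context frobenius_involution
begin

lemma frob_zero: "(0 :: 'a) ^ q = 0"
  using q_pos by simp

lemma frob_minus: "(- x) ^ q = - (x ^ q :: 'a)"
  using frob_add[of x "- x"] frob_zero by (simp add: eq_neg_iff_add_eq_0 add.commute)

lemma frob_diff: "(x - y) ^ q = x ^ q - (y ^ q :: 'a)"
  using frob_add[of x "- y"] by (simp add: frob_minus)

lemma frob_sum: "(\<Sum>i\<in>A. f i) ^ q = (\<Sum>i\<in>A. f i ^ q :: 'a)"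
  by (induction A rule: infinite_finite_induct) (simp_all add: frob_zero frob_add)

lemma subfield_q_0 [intro]: "(0 :: 'a) \<in> subfield_q q"
  by (simp add: subfield_q_def frob_zero)

lemma subfield_q_1 [intro]: "(1 :: 'a) \<in> subfield_q q"
  by (simp add: subfield_q_def)

lemma subfield_q_minus [intro]: "x \<in> subfield_q q \<Longrightarrow> - x \<in> subfield_q q" for x :: 'a
  by (simp add: subfield_q_def frob_minus)

lemma subfield_q_mult [intro]: "x \<in> subfield_q q \<Longrightarrow> y \<in> subfield_q q \<Longrightarrow> x * y \<in> subfield_q q" for x y :: 'a
  by (simp add: subfield_q_def power_mult_distrib)

lemma subfield_q_sum [intro]: "(\<And>i. i \<in> A \<Longrightarrow> f i \<in> subfield_q q) \<Longrightarrow> (\<Sum>i\<in>A. f i) \<in> subfield_q q" for f :: "_ \<Rightarrow> 'a"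
  by (simp add: subfield_q_def frob_sum)

lemma Tr_in_subfield_q: "Tr q x \<in> subfield_q q" for x :: 'a
  by (simp add: subfield_q_def Tr_def frob_add frob_frob add.commute)

definition frob_poly :: "'a poly \<Rightarrow> 'a poly" where
  "frob_poly P = map_poly (\<lambda>c. c ^ q) P"

lemma coeff_frob_poly: "coeff (frob_poly P) i = coeff P i ^ q"
  unfolding frob_poly_def by (rule coeff_map_poly) (rule frob_zero)

lemma frob_poly_add: "frob_poly (A + B) = frob_poly A + frob_poly B"
  by (rule poly_eqI) (simp add: coeff_frob_poly frob_add)

lemma frob_poly_mult: "frob_poly (A * B) = frob_poly A * frob_poly B"
  by (rule poly_eqI) (simp add: coeff_frob_poly coeff_mult frob_sum power_mult_distrib)

lemma degree_frob_poly_le: "degree (frob_poly P) \<le> degree P"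
  unfolding frob_poly_def by (simp add: degree_map_poly)

lemma over_Fq_iff_frob_poly: "over_Fq q P \<longleftrightarrow> frob_poly P = P"
  by (simp add: over_Fq_def subfield_q_def poly_eq_iff coeff_frob_poly)

lemma over_Fq_mult: "over_Fq q A \<Longrightarrow> over_Fq q B \<Longrightarrow> over_Fq q (A * B)" for A B :: "'a poly"
  by (simp add: over_Fq_iff_frob_poly frob_poly_mult)

lemma over_Fq_monom: "c \<in> subfield_q q \<Longrightarrow> over_Fq q (monom c i :: 'a poly)"
  by (auto simp: over_Fq_def coeff_monom)

lemma over_Fq_reflect_poly: "over_Fq q P \<Longrightarrow> over_Fq q (reflect_poly P :: 'a poly)"
  by (auto simp: over_Fq_def coeff_reflect_poly)

lemma over_Fq_xn1: "over_Fq q (xn1 m :: 'a poly)"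
  by (auto simp: over_Fq_def xn1_def coeff_monom)

lemma over_Fq_factor:
  fixes A B C :: "'a poly"
  assumes "over_Fq q B" "B \<noteq> 0" "over_Fq q (B * C)"
  shows "over_Fq q C"
proof -
  have "B * frob_poly C = B * C"
    using assms by (simp add: over_Fq_iff_frob_poly frob_poly_mult)
  then show ?thesis
    using assms(2) by (simp add: over_Fq_iff_frob_poly)
qed

lemma over_Fq_mod:
  fixes A B :: "'a poly"
  assumes "over_Fq q A" "over_Fq q B"
  shows "over_Fq q (A mod B)"
proof -
  have "frob_poly (A mod B) + frob_poly (A div B) * B = frob_poly (A mod B + A div B * B)"
    using assms(2) unfolding over_Fq_iff_frob_poly by (simp only: frob_poly_add frob_poly_mult)
  also have "\<dots> = A"
    using assms(1) by (simp add: over_Fq_iff_frob_poly)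
  finally have "A mod B = (frob_poly (A mod B) + frob_poly (A div B) * B) mod B"
    by (simp only:)
  also have "\<dots> = frob_poly (A mod B) mod B"
    by (rule mod_mult_self1)
  also have "\<dots> = frob_poly (A mod B)"
  proof (cases "B = 0 \<or> A mod B = 0")
    case False
    then have "degree (frob_poly (A mod B)) < degree B"
      using degree_frob_poly_le[of "A mod B"] degree_mod_less'[of B A] by linarith
    then show ?thesis
      by (rule mod_poly_less)
  qed (auto simp: frob_poly_def)
  finally show ?thesis
    by (simp add: over_Fq_iff_frob_poly)
qed

lemma lincomb_in_Fq_vec:
  fixes v :: "nat \<Rightarrow> 'a list"
  assumes "\<And>i. i < k \<Longrightarrow> c i \<in> subfield_q q" and "\<And>i. i < k \<Longrightarrow> v i \<in> Fq_vec q m"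
  shows "lincomb m k c v \<in> Fq_vec q m"
proof -
  have entry: "v i ! j \<in> subfield_q q" if "i < k" "j < m" for i j
    using assms(2)[OF that(1)] that(2) by (auto simp: Fq_vec_def)
  have "lincomb m k c v ! j \<in> subfield_q q" if "j < m" for j
    unfolding nth_lincomb[OF that] using assms(1) entry that by (intro subfield_q_sum subfield_q_mult) auto
  then show ?thesis
    by (auto simp: Fq_vec_def set_conv_nth)
qed

lemma tau_in_Fq_vec: "v \<in> Fq_vec q (2 * n) \<Longrightarrow> tau n v \<in> Fq_vec q (2 * n)" for v :: "'a list"
  using set_drop_subset[of n v] set_take_subset[of n v] by (auto simp: Fq_vec_def tau_def)

lemma uminus_in_Fq_vec: "v \<in> Fq_vec q m \<Longrightarrow> map uminus v \<in> Fq_vec q m" for v :: "'a list"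
  by (auto simp: Fq_vec_def)

lemma coeff_vec_in_Fq_vec: "over_Fq q P \<Longrightarrow> coeff_vec m P \<in> Fq_vec q m" for P :: "'a poly"
  by (auto simp: over_Fq_def Fq_vec_def coeff_vec_def)

lemma over_Fq_Poly: "set w \<subseteq> subfield_q q \<Longrightarrow> over_Fq q (Poly w :: 'a poly)"
  by (auto simp: over_Fq_def nth_default_def)

lemma cyclic_code_subset_Fq_vec: "over_Fq q g \<Longrightarrow> cyclic_code q n g \<subseteq> Fq_vec q (2 * n)" for g :: "'a poly"
  by (auto simp: cyclic_code_def intro!: coeff_vec_in_Fq_vec over_Fq_mod over_Fq_mult over_Fq_xn1)

lemma cyclic_code_dual_basis:
  fixes g h :: "'a poly"
  assumes "0 < n" "over_Fq q g" "g * h = xn1 (2 * n)"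
  shows "is_Fq_basis q (2 * n) (degree g) (\<lambda>i. coeff_vec (2 * n) (monom 1 i * reflect_poly h))
           (euclid_dual q (2 * n) (cyclic_code q n g))"
  unfolding is_Fq_basis_def
proof (intro conjI allI impI ballI)
  have "0 < 2 * n"
    using assms(1) by simp
  note gh = factors_xn1[OF assms(3) this]
  have h: "over_Fq q h"
    using over_Fq_factor[OF assms(2) gh(1)] assms(3) by (simp add: over_Fq_xn1)
  have shift_h: "over_Fq q (monom 1 i * reflect_poly h)" for i
    using h by (intro over_Fq_mult over_Fq_monom over_Fq_reflect_poly subfield_q_1)
  show "coeff_vec (2 * n) (monom 1 i * reflect_poly h) \<in> euclid_dual q (2 * n) (cyclic_code q n g)"
    if "i < degree g" for i
  proof -
    have "dotp (2 * n) d (coeff_vec (2 * n) (monom 1 i * reflect_poly h)) = 0" if "d \<in> cyclic_code q n g" for d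
      using that dotp_codeword_shift_reflect_check_poly_eq_0[OF \<open>0 < 2 * n\<close> assms(3) \<open>i < degree g\<close>]
      by (auto simp: cyclic_code_def)
    then show ?thesis
      using coeff_vec_in_Fq_vec[OF shift_h] by (simp add: euclid_dual_def)
  qed
  show "c i = 0"
    if "(\<forall>i<degree g. c i \<in> subfield_q q)
        \<and> lincomb (2 * n) (degree g) c (\<lambda>i. coeff_vec (2 * n) (monom 1 i * reflect_poly h)) = replicate (2 * n) 0"
      and "i < degree g" for c i
    using that gh by (intro lincomb_shifts_eq_0_imp[of "reflect_poly h" "degree g" "2 * n"]) simp_all
  fix w
  assume "w \<in> euclid_dual q (2 * n) (cyclic_code q n g)"
  then have w: "w \<in> Fq_vec q (2 * n)" and orth: "\<And>d. d \<in> cyclic_code q n g \<Longrightarrow> dotp (2 * n) d w = 0"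
    by (auto simp: euclid_dual_def)
  have "dotp (2 * n) (coeff_vec (2 * n) ((g * monom 1 j) mod xn1 (2 * n))) w = 0" for j
    by (rule orth) (auto simp: cyclic_code_def intro: over_Fq_monom)
  moreover have "length w = 2 * n"
    using w by (simp add: Fq_vec_def)
  ultimately have "h dvd Poly (rev w)"
    using \<open>0 < 2 * n\<close> assms(3) by (intro orthogonal_cyclic_code_imp_check_poly_dvd)
  then obtain Q where Q: "Poly (rev w) = h * Q"
    by (elim dvdE)
  have "over_Fq q (Poly (rev w))"
    using w by (intro over_Fq_Poly) (simp add: Fq_vec_def)
  then have "over_Fq q Q"
    unfolding Q by (rule over_Fq_factor[OF h gh(2)])
  then have "over_Fq q (monom 1 (degree g - 1 - degree Q) * reflect_poly Q)"
    by (intro over_Fq_mult over_Fq_monom over_Fq_reflect_poly subfield_q_1)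
  then show "\<exists>c. (\<forall>i<degree g. c i \<in> subfield_q q)
            \<and> w = lincomb (2 * n) (degree g) c (\<lambda>i. coeff_vec (2 * n) (monom 1 i * reflect_poly h))"
    using rev_check_poly_multiple_eq_lincomb_shifts[OF \<open>0 < 2 * n\<close> assms(3) \<open>length w = 2 * n\<close> Q]
    by (intro exI[of _ "coeff (monom 1 (degree g - 1 - degree Q) * reflect_poly Q)"]) (simp add: over_Fq_def)
qed

end

section \<open>The map \<open>\<Psi>\<close> and the alternating dual\<close>

locale Psi_coordinates = frobenius_involution q
  for q :: nat +
  fixes \<beta> :: "'a::field"
  assumes beta_sq_neq: "\<beta> ^ 2 \<noteq> (\<beta> ^ q) ^ 2"
begin

text \<open>Solving \<open>Tr(\<beta>a) = s\<close>, \<open>Tr(\<beta>\<^sup>qa) = t\<close> as a linear system in \<open>a\<close> and \<open>a\<^sup>q\<close>.\<close>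

definition Tr_pair_inv :: "'a \<Rightarrow> 'a \<Rightarrow> 'a" where
  "Tr_pair_inv s t = (\<beta> * s - \<beta> ^ q * t) / (\<beta> ^ 2 - (\<beta> ^ q) ^ 2)"

lemma Tr_pair_inv_Tr: "Tr_pair_inv (Tr q (\<beta> * a)) (Tr q (\<beta> ^ q * a)) = a"
proof -
  have "\<beta> * Tr q (\<beta> * a) - \<beta> ^ q * Tr q (\<beta> ^ q * a) = (\<beta> ^ 2 - (\<beta> ^ q) ^ 2) * a"
    by (simp add: Tr_def power_mult_distrib frob_frob algebra_simps power2_eq_square)
  then show ?thesis
    using beta_sq_neq by (simp add: Tr_pair_inv_def)
qed

lemma Tr_Tr_pair_inv:
  assumes "s \<in> subfield_q q" "t \<in> subfield_q q"
  shows "Tr q (\<beta> * Tr_pair_inv s t) = s" "Tr q (\<beta> ^ q * Tr_pair_inv s t) = t"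
proof -
  define D where "D = \<beta> ^ 2 - (\<beta> ^ q) ^ 2"
  have "D \<noteq> 0"
    using beta_sq_neq by (simp add: D_def)
  have "D ^ q = - D"
    by (simp add: D_def frob_diff power_mult_distrib frob_frob power2_eq_square)
  moreover have "(\<beta> * s - \<beta> ^ q * t) ^ q = \<beta> ^ q * s - \<beta> * t"
    using assms by (simp add: subfield_q_def frob_diff power_mult_distrib frob_frob)
  ultimately have "Tr_pair_inv s t ^ q = (\<beta> ^ q * s - \<beta> * t) / - D"
    unfolding Tr_pair_inv_def D_def[symmetric] power_divide by simp
  then have frob: "Tr_pair_inv s t ^ q = (\<beta> * t - \<beta> ^ q * s) / D"
    by (simp add: minus_divide_left)
  show "Tr q (\<beta> * Tr_pair_inv s t) = s" "Tr q (\<beta> ^ q * Tr_pair_inv s t) = t"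
    using \<open>D \<noteq> 0\<close> unfolding Tr_def power_mult_distrib frob frob_frob
    by (simp_all add: Tr_pair_inv_def D_def[symmetric] field_simps)
       (simp_all add: D_def algebra_simps power2_eq_square)
qed

lemma Tr_pair_inv_sum:
  "Tr_pair_inv (\<Sum>i<k. c i * s i) (\<Sum>i<k. c i * t i) = (\<Sum>i<k. c i * Tr_pair_inv (s i) (t i))"
  by (simp add: Tr_pair_inv_def sum_distrib_left sum_divide_distrib sum_subtractf[symmetric] algebra_simps)

definition Psi_inv_explicit :: "nat \<Rightarrow> 'a list \<Rightarrow> 'a list" where
  "Psi_inv_explicit n w = map (\<lambda>j. Tr_pair_inv (w ! j) (w ! (n + j))) [0..<n]"

lemma length_Psi_inv_explicit [simp]: "length (Psi_inv_explicit n w) = n"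
  by (simp add: Psi_inv_explicit_def)

lemma Psi_inv_explicit_Psi: "length a = n \<Longrightarrow> Psi_inv_explicit n (Psi q \<beta> a) = a"
  by (rule nth_equalityI) (auto simp: Psi_inv_explicit_def nth_Psi Tr_pair_inv_Tr)

lemma nth_Psi_inv_explicit: "i < n \<Longrightarrow> Psi_inv_explicit n w ! i = Tr_pair_inv (w ! i) (w ! (n + i))"
  by (simp add: Psi_inv_explicit_def)

lemma Psi_Psi_inv_explicit:
  assumes "w \<in> Fq_vec q (2 * n)"
  shows "Psi q \<beta> (Psi_inv_explicit n w) = w"
proof (rule nth_equalityI)
  have entry: "i < 2 * n \<Longrightarrow> w ! i \<in> subfield_q q" for i
    using assms by (auto simp: Fq_vec_def)
  show "length (Psi q \<beta> (Psi_inv_explicit n w)) = length w"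
    using assms by (simp add: Fq_vec_def)
  fix j
  assume "j < length (Psi q \<beta> (Psi_inv_explicit n w))"
  then have "j < 2 * n"
    by simp
  show "Psi q \<beta> (Psi_inv_explicit n w) ! j = w ! j"
  proof (cases "j < n")
    case True
    then show ?thesis
      using entry \<open>j < 2 * n\<close> by (simp add: nth_Psi nth_Psi_inv_explicit Tr_Tr_pair_inv)
  next
    case False
    then obtain i where "j = n + i" "i < n"
      using \<open>j < 2 * n\<close> by (metis add_diff_inverse_nat add_less_imp_less_left mult_2)
    then show ?thesis
      using entry by (simp add: nth_Psi nth_Psi_inv_explicit Tr_Tr_pair_inv)
  qed
qed

lemma Psi_inv_explicit_lincomb: "Psi_inv_explicit n (lincomb (2 * n) k c v) = lincomb n k c (\<lambda>i. Psi_inv_explicit n (v i))"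
  by (rule nth_equalityI) (simp_all add: Psi_inv_explicit_def nth_lincomb Tr_pair_inv_sum)

lemma Psi_in_Fq_vec: "Psi q \<beta> a \<in> Fq_vec q (2 * length a)"
  by (auto simp: Fq_vec_def Psi_def Tr_in_subfield_q)

lemma Psi_inv_eq_Psi_inv_explicit:
  assumes "w \<in> Fq_vec q (2 * n)"
  shows "Psi_inv q \<beta> n w = Psi_inv_explicit n w"
  unfolding Psi_inv_def
proof (rule the_equality)
  show "length (Psi_inv_explicit n w) = n \<and> Psi q \<beta> (Psi_inv_explicit n w) = w"
    using assms by (simp add: Psi_Psi_inv_explicit)
  show "a = Psi_inv_explicit n w" if "length a = n \<and> Psi q \<beta> a = w" for a
    using that Psi_inv_explicit_Psi[of a n] by simp
qed

lemma Psi_inv_Psi: "length a = n \<Longrightarrow> Psi_inv q \<beta> n (Psi q \<beta> a) = a"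
  by (metis Psi_in_Fq_vec Psi_inv_eq_Psi_inv_explicit Psi_inv_explicit_Psi)

lemma Psi_Psi_inv: "w \<in> Fq_vec q (2 * n) \<Longrightarrow> Psi q \<beta> (Psi_inv q \<beta> n w) = w"
  by (simp add: Psi_inv_eq_Psi_inv_explicit Psi_Psi_inv_explicit)

lemma length_Psi_inv: "w \<in> Fq_vec q (2 * n) \<Longrightarrow> length (Psi_inv q \<beta> n w) = n"
  by (simp add: Psi_inv_eq_Psi_inv_explicit)

lemma Psi_inv_lincomb:
  assumes "\<And>i. i < k \<Longrightarrow> c i \<in> subfield_q q" and "\<And>i. i < k \<Longrightarrow> v i \<in> Fq_vec q (2 * n)"
  shows "Psi_inv q \<beta> n (lincomb (2 * n) k c v) = lincomb n k c (\<lambda>i. Psi_inv q \<beta> n (v i))"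
  using assms by (simp add: Psi_inv_eq_Psi_inv_explicit lincomb_in_Fq_vec Psi_inv_explicit_lincomb cong: lincomb_cong)

lemma alt_ip_eq_dotp_tau:
  assumes "length u = n" "length v = n"
  shows "alt_ip q \<beta> n u v = dotp (2 * n) (Psi q \<beta> u) (tau n (Psi q \<beta> v))"
proof -
  have "\<beta> ^ (2 * q) = \<beta> ^ q * \<beta> ^ q"
    by (simp add: mult.commute power_mult power2_eq_square)
  have Tr_Tr: "Tr q (\<beta> ^ q * a) * Tr q (\<beta> * b) - Tr q (\<beta> * a) * Tr q (\<beta> ^ q * b)
      = (\<beta> ^ (2 * q) - \<beta> ^ 2) * (a * b ^ q - a ^ q * b)" for a b
    unfolding \<open>\<beta> ^ (2 * q) = \<beta> ^ q * \<beta> ^ q\<close> Tr_def power_mult_distrib frob_frob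
    by (simp add: algebra_simps power2_eq_square)
  have "dotp (2 * n) (Psi q \<beta> u) (tau n (Psi q \<beta> v))
      = (\<Sum>j<n. Psi q \<beta> u ! j * tau n (Psi q \<beta> v) ! j)
        + (\<Sum>j<n. Psi q \<beta> u ! (n + j) * tau n (Psi q \<beta> v) ! (n + j))"
    unfolding dotp_def mult_2 by (rule sum_lessThan_add)
  also have "\<dots> = (\<Sum>j<n. Tr q (\<beta> ^ q * u ! j) * Tr q (\<beta> * v ! j)
                         - Tr q (\<beta> * u ! j) * Tr q (\<beta> ^ q * v ! j))"
    using assms by (simp add: nth_tau nth_Psi sum_subtractf sum_negf)
  also have "\<dots> = (\<Sum>j<n. (\<beta> ^ (2 * q) - \<beta> ^ 2) * (u ! j * (v ! j) ^ q - (u ! j) ^ q * v ! j))"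
    by (simp only: Tr_Tr)
  also have "\<dots> = alt_ip q \<beta> n u v"
    by (simp only: alt_ip_def sum_distrib_left)
  finally show ?thesis
    by (rule sym)
qed

lemma alt_ip_Psi_inv_tau:
  assumes "length u = n" "w \<in> Fq_vec q (2 * n)"
  shows "alt_ip q \<beta> n u (Psi_inv q \<beta> n (tau n w)) = - dotp (2 * n) (Psi q \<beta> u) w"
proof -
  have "tau n w \<in> Fq_vec q (2 * n)"
    using assms(2) by (rule tau_in_Fq_vec)
  moreover have "length w = 2 * n"
    using assms(2) by (simp add: Fq_vec_def)
  ultimately show ?thesis
    using assms(1) by (simp add: alt_ip_eq_dotp_tau length_Psi_inv Psi_Psi_inv tau_tau dotp_uminus_right)
qed

lemma alt_dual_Psi_preimage:
  assumes "D \<subseteq> Fq_vec q (2 * n)"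
  shows "alt_dual q \<beta> n {\<alpha>. length \<alpha> = n \<and> Psi q \<beta> \<alpha> \<in> D}
           = (\<lambda>w. Psi_inv q \<beta> n (tau n w)) ` euclid_dual q (2 * n) D"
proof (intro equalityI subsetI)
  fix v
  assume v: "v \<in> alt_dual q \<beta> n {\<alpha>. length \<alpha> = n \<and> Psi q \<beta> \<alpha> \<in> D}"
  then have "length v = n"
    by (simp add: alt_dual_def)
  define w where "w = map uminus (tau n (Psi q \<beta> v))"
  have w: "w \<in> Fq_vec q (2 * n)"
    unfolding w_def using Psi_in_Fq_vec[of v] \<open>length v = n\<close> by (simp add: tau_in_Fq_vec uminus_in_Fq_vec)
  have v_eq: "v = Psi_inv q \<beta> n (tau n w)"
    using \<open>length v = n\<close> by (simp add: w_def tau_uminus_tau Psi_inv_Psi)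
  have "dotp (2 * n) d w = 0" if "d \<in> D" for d
  proof -
    have d: "d \<in> Fq_vec q (2 * n)"
      using assms that by blast
    then have "Psi_inv q \<beta> n d \<in> {\<alpha>. length \<alpha> = n \<and> Psi q \<beta> \<alpha> \<in> D}"
      using that by (simp add: length_Psi_inv Psi_Psi_inv)
    then have "alt_ip q \<beta> n (Psi_inv q \<beta> n d) v = 0"
      using v by (simp add: alt_dual_def)
    then show ?thesis
      using d by (simp add: v_eq alt_ip_Psi_inv_tau w length_Psi_inv Psi_Psi_inv)
  qed
  then show "v \<in> (\<lambda>w. Psi_inv q \<beta> n (tau n w)) ` euclid_dual q (2 * n) D"
    using v_eq w by (auto simp: euclid_dual_def)
next
  fix v
  assume "v \<in> (\<lambda>w. Psi_inv q \<beta> n (tau n w)) ` euclid_dual q (2 * n) D"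
  then obtain w where w: "w \<in> euclid_dual q (2 * n) D" and v: "v = Psi_inv q \<beta> n (tau n w)"
    by blast
  have w_vec: "w \<in> Fq_vec q (2 * n)"
    using w by (simp add: euclid_dual_def)
  show "v \<in> alt_dual q \<beta> n {\<alpha>. length \<alpha> = n \<and> Psi q \<beta> \<alpha> \<in> D}"
    unfolding alt_dual_def
  proof (intro CollectI conjI ballI)
    show "length v = n"
      unfolding v using w_vec by (intro length_Psi_inv tau_in_Fq_vec)
    fix u
    assume "u \<in> {\<alpha>. length \<alpha> = n \<and> Psi q \<beta> \<alpha> \<in> D}"
    then have "length u = n" "Psi q \<beta> u \<in> D"
      by simp_all
    then show "alt_ip q \<beta> n u v = 0"
      unfolding v alt_ip_Psi_inv_tau[OF \<open>length u = n\<close> w_vec] using w by (simp add: euclid_dual_def)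
  qed
qed

lemma inj_on_Psi_inv_tau: "inj_on (\<lambda>w. Psi_inv q \<beta> n (tau n w)) (Fq_vec q (2 * n))"
proof (rule inj_onI)
  fix v w
  assume "v \<in> Fq_vec q (2 * n)" "w \<in> Fq_vec q (2 * n)"
    and "Psi_inv q \<beta> n (tau n v) = Psi_inv q \<beta> n (tau n w)"
  then have "tau n (tau n v) = tau n (tau n w)"
    by (metis Psi_Psi_inv tau_in_Fq_vec)
  then show "v = w"
    using \<open>v \<in> Fq_vec q (2 * n)\<close> \<open>w \<in> Fq_vec q (2 * n)\<close> by (simp add: Fq_vec_def tau_tau)
qed

lemma is_Fq_basis_Psi_inv_tau:
  assumes "is_Fq_basis q (2 * n) k v S" "S \<subseteq> Fq_vec q (2 * n)"
  shows "is_Fq_basis q n k (\<lambda>i. Psi_inv q \<beta> n (tau n (v i))) ((\<lambda>w. Psi_inv q \<beta> n (tau n w)) ` S)"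
proof (rule is_Fq_basis_image[OF assms(1) subfield_q_0])
  have v: "v i \<in> Fq_vec q (2 * n)" if "i < k" for i
    using assms that by (auto simp: is_Fq_basis_def)
  show "Psi_inv q \<beta> n (tau n (lincomb (2 * n) k c v)) = lincomb n k c (\<lambda>i. Psi_inv q \<beta> n (tau n (v i)))"
    if "\<forall>i<k. c i \<in> subfield_q q" for c
  proof -
    have "tau n (lincomb (2 * n) k c v) = lincomb (2 * n) k c (\<lambda>i. tau n (v i))"
      using v by (intro tau_lincomb) (simp add: Fq_vec_def)
    also have "Psi_inv q \<beta> n \<dots> = lincomb n k c (\<lambda>i. Psi_inv q \<beta> n (tau n (v i)))"
      using that v by (intro Psi_inv_lincomb tau_in_Fq_vec) auto
    finally show ?thesis .
  qed
  show "inj_on (\<lambda>w. Psi_inv q \<beta> n (tau n w)) {lincomb (2 * n) k c v |c. \<forall>i<k. c i \<in> subfield_q q}"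
    using v by (intro inj_on_subset[OF inj_on_Psi_inv_tau]) (auto intro: lincomb_in_Fq_vec)
qed

end

section \<open>Primitive elements\<close>

lemma primitive_elem_order_ge:
  fixes \<beta> :: "'a::{field,finite}"
  assumes "primitive_elem \<beta>" "0 < j" "\<beta> ^ j = 1"
  shows "card (UNIV :: 'a set) - 1 \<le> j"
proof -
  have "UNIV - {0} \<subseteq> (\<lambda>i. \<beta> ^ i) ` {..<j}"
  proof
    fix x :: 'a
    assume "x \<in> UNIV - {0}"
    then obtain i where "\<beta> ^ i = x"
      using assms(1) unfolding primitive_elem_def by auto
    moreover have "\<beta> ^ i = \<beta> ^ (j * (i div j)) * \<beta> ^ (i mod j)"
      by (simp add: power_add[symmetric])
    moreover have "\<beta> ^ (j * (i div j)) = 1"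
      using assms(3) by (simp add: power_mult)
    ultimately show "x \<in> (\<lambda>i. \<beta> ^ i) ` {..<j}"
      using assms(2) by auto
  qed
  then have "card (UNIV - {0 :: 'a}) \<le> card ((\<lambda>i. \<beta> ^ i) ` {..<j})"
    by (intro card_mono) simp_all
  also have "\<dots> \<le> j"
    using card_image_le[of "{..<j}" "\<lambda>i. \<beta> ^ i"] by simp
  finally show ?thesis
    by (simp add: card_Diff_singleton)
qed

lemma primitive_elem_sq_neq_frob_sq:
  fixes \<beta> :: "'a::{field,finite}"
  assumes "primitive_elem \<beta>" "card (UNIV :: 'a set) = q ^ 2" "2 \<le> q"
  shows "\<beta> ^ 2 \<noteq> (\<beta> ^ q) ^ 2"
proof
  assume eq: "\<beta> ^ 2 = (\<beta> ^ q) ^ 2"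
  have "2 * q \<le> q ^ 2"
    using mult_le_mono1[OF assms(3), of q] by (simp add: power2_eq_square)
  have "\<beta> \<noteq> 0"
  proof
    assume "\<beta> = 0"
    have "x \<in> {0, 1}" for x :: 'a
    proof (cases "x = 0")
      case False
      then obtain j where "\<beta> ^ j = x"
        using assms(1) unfolding primitive_elem_def by auto
      then show ?thesis
        using \<open>\<beta> = 0\<close> by (cases j) auto
    qed simp
    then have "card (UNIV :: 'a set) \<le> card {0, 1 :: 'a}"
      by (intro card_mono) auto
    then show False
      using assms \<open>2 * q \<le> q ^ 2\<close> by simp
  qed
  have "2 * q - 2 + 2 = q * 2"
    using assms(3) by simp
  then have "(\<beta> ^ q) ^ 2 = \<beta> ^ (2 * q - 2) * \<beta> ^ 2"
    by (simp only: power_add[symmetric] power_mult)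
  then have "\<beta> ^ (2 * q - 2) = 1"
    using eq \<open>\<beta> \<noteq> 0\<close> by simp
  then have "q ^ 2 - 1 \<le> 2 * q - 2"
    using primitive_elem_order_ge[OF assms(1)] assms(2,3) by simp
  then show False
    using \<open>2 * q \<le> q ^ 2\<close> assms(3) by simp
qed

theorem theorem4p5:
  fixes q n :: nat and \<beta> :: "'a::{field,finite}" and g :: "'a poly"
  assumes "prime_power q"
    and "card (UNIV :: 'a set) = q ^ 2"
    and "primitive_elem \<beta>"
    and "n > 0"
    and "over_Fq q g"
    and "lead_coeff g = 1"
    and "g dvd xn1 (2*n)"
    and "g \<noteq> xn1 (2*n)"
  shows "let k = degree g;
             h = xn1 (2*n) div g;
             hstar = smult (1 / lead_coeff h) (reflect_poly h);
             V = coeff_vec (2*n) hstar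
         in is_Fq_basis q n k
              (\<lambda>i. Psi_inv q \<beta> n (tau n ((sigma ^^ i) V)))
              (alt_dual q \<beta> n (code_C q \<beta> n g))"
proof -
  interpret Psi_coordinates q \<beta>
    using frobenius_involution_if_card_UNIV_eq_sq[OF assms(1,2)]
      primitive_elem_sq_neq_frob_sq[OF assms(3,2) prime_power_ge_2[OF assms(1)]]
    by (simp add: Psi_coordinates_def Psi_coordinates_axioms_def)
  define h where "h = xn1 (2 * n) div g"
  have gh: "g * h = xn1 (2 * n)"
    unfolding h_def using assms(7) by (rule dvd_mult_div_cancel)
  have "0 < 2 * n"
    using assms(4) by simp
  note factors = factors_xn1[OF gh this]
  have "lead_coeff h = 1"
    using lead_coeff_mult[of g h] assms(4,6) by (simp add: gh lead_coeff_xn1)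
  then have "smult (1 / lead_coeff h) (reflect_poly h) = reflect_poly h"
    by simp
  moreover have "(sigma ^^ i) (coeff_vec (2 * n) (reflect_poly h)) = coeff_vec (2 * n) (monom 1 i * reflect_poly h)"
    if "i < degree g" for i
    using factors that by (intro sigma_pow_coeff_vec[where k = "degree g"]) simp_all
  moreover have "is_Fq_basis q n (degree g) (\<lambda>i. Psi_inv q \<beta> n (tau n (coeff_vec (2 * n) (monom 1 i * reflect_poly h))))
      (alt_dual q \<beta> n (code_C q \<beta> n g))"
    unfolding code_C_def alt_dual_Psi_preimage[OF cyclic_code_subset_Fq_vec[OF assms(5)]]
    by (intro is_Fq_basis_Psi_inv_tau cyclic_code_dual_basis assms(4,5) gh)
      (auto simp: euclid_dual_def)
  ultimately show ?thesis
    unfolding Let_def h_def[symmetric] by (simp cong: is_Fq_basis_cong)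
qed

end
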